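(* Let $A\in\mathbb{R}^{n\times n}$ and $T>0$. Suppose that for $x\in\mathbb{R}^n$, $W(x,T)=0$ (the zero matrix) implies $x=0$. Then the FTCSP $$\text{minimize } h_T(p)\quad\text{subject to } p\in X_T\cap\Delta$$ has a unique optimal solution, both for $h_T=f_T$ and for $h_T=g_T$.
   Context: For $T>0$ and $i=1,\dots,n$ let $e_i$ be the $i$-th standard basis vector of $\mathbb{R}^n$ and $W_i(T):=\int_0^T e^{At}e_ie_i^\top e^{A^\top t}\,dt$. For $p=(p_i)\in\mathbb{R}^n$ put $W(p,T):=\sum_{i=1}^n p_iW_i(T)$. Define $X_T:=\{p\in\mathbb{R}^n : W(p,T)\succ 0\}$ and $\Delta:=\{p\in\mathbb{R}^n:\sum_i p_i=1,\ p_i\ge 0\ \forall i\}$. On $X_T$ define $f_T(p):=-\log\det W(p,T)$ and $g_T(p):=\operatorname{tr}(W(p,T)^{-1})$. *)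

theory Defs
  imports "HOL-Analysis.Analysis"
begin

primrec mat_pow :: "real^'n^'n \<Rightarrow> nat \<Rightarrow> real^'n^'n" where
  "mat_pow M 0 = mat 1"
| "mat_pow M (Suc k) = M ** mat_pow M k"

definition mat_exp :: "real^'n^'n \<Rightarrow> real^'n^'n" where
  "mat_exp M = (\<Sum>k. (1 / fact k) *\<^sub>R mat_pow M k)"

definition outer :: "real^'n \<Rightarrow> real^'n \<Rightarrow> real^'n^'n" where
  "outer u v = (\<chi> j k. u $ j * v $ k)"

definition pos_def :: "real^'n^'n \<Rightarrow> bool" where
  "pos_def M \<longleftrightarrow> transpose M = M \<and> (\<forall>x. x \<noteq> 0 \<longrightarrow> x \<bullet> (M *v x) > 0)"

definition Wi :: "real^'n^'n \<Rightarrow> 'n \<Rightarrow> real \<Rightarrow> real^'n^'n" where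
  "Wi A i T = integral {0..T}
     (\<lambda>t. mat_exp (t *\<^sub>R A) ** outer (axis i 1) (axis i 1) ** mat_exp (t *\<^sub>R transpose A))"

definition Wp :: "real^'n^'n \<Rightarrow> real^'n \<Rightarrow> real \<Rightarrow> real^'n^'n" where
  "Wp A p T = (\<Sum>i\<in>UNIV. p $ i *\<^sub>R Wi A i T)"

definition XT :: "real^'n^'n \<Rightarrow> real \<Rightarrow> (real^'n) set" where
  "XT A T = {p. pos_def (Wp A p T)}"

definition std_simplex :: "(real^'n) set" where
  "std_simplex = {p. (\<Sum>i\<in>UNIV. p $ i) = 1 \<and> (\<forall>i. p $ i \<ge> 0)}"

definition fT :: "real^'n^'n \<Rightarrow> real \<Rightarrow> real^'n \<Rightarrow> real" where
  "fT A T p = - ln (det (Wp A p T))"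

definition gT :: "real^'n^'n \<Rightarrow> real \<Rightarrow> real^'n \<Rightarrow> real" where
  "gT A T p = trace (matrix_inv (Wp A p T))"

end

theory Submission
  imports Defs
begin

text \<open>
  The map \<open>p \<mapsto> W(p,T)\<close> is linear, injective by hypothesis, and sends \<open>\<Delta>\<close> to positive
  semidefinite matrices. Since \<open>-log det\<close> and \<open>tr(\<cdot>\<^sup>-\<^sup>1)\<close> are strictly midpoint convex on
  positive definite matrices, both objectives are strictly midpoint convex on the midpoint-closed
  set \<open>X\<^sub>T \<inter> \<Delta>\<close>, so there is at most one minimiser. For existence, the uniform weights lie in
  \<open>X\<^sub>T\<close> because \<open>e\<^sup>0 = I\<close>, and the sublevel set through them is a compact subset of \<open>X\<^sub>T \<inter> \<Delta>\<close>.
\<close>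

section \<open>Matrix algebra\<close>

lemma transpose_add: "transpose (A + B) = transpose A + transpose (B::real^'n^'n)"
  by (simp add: vec_eq_iff transpose_def)

lemma transpose_diff: "transpose (A - B) = transpose A - transpose (B::real^'n^'n)"
  by (simp add: vec_eq_iff transpose_def)

lemma matrix_add_rdistrib: "((B::real^'n^'n) + C) ** A = B ** A + C ** A"
  by (simp add: vec_eq_iff matrix_matrix_mult_def sum.distrib algebra_simps)

lemma matrix_diff_rdistrib: "((B::real^'n^'n) - C) ** A = B ** A - C ** A"
  by (simp add: vec_eq_iff matrix_matrix_mult_def sum_subtractf algebra_simps)

lemma matrix_diff_ldistrib: "(A::real^'n^'n) ** (B - C) = A ** B - A ** C"
  by (simp add: vec_eq_iff matrix_matrix_mult_def sum_subtractf algebra_simps)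

lemma scaleR_matrix_vector_mult: "((c::real) *\<^sub>R (A::real^'n^'n)) *v x = c *\<^sub>R (A *v x)"
  by (metis matrix_scaleR_vector_ac matrix_vector_mult_scaleR)

lemma linear_transpose: "linear (transpose :: real^'n^'n \<Rightarrow> real^'n^'n)"
  by (intro linearI) (simp_all add: transpose_add transpose_scalar)

lemma bounded_linear_quadratic_form: "bounded_linear (\<lambda>M::real^'n^'n. x \<bullet> (M *v x))"
proof -
  have "linear (\<lambda>M::real^'n^'n. x \<bullet> (M *v x))"
    by (intro linearI) (simp_all add: matrix_vector_mult_add_rdistrib inner_add_right scaleR_matrix_vector_mult)
  then show ?thesis by (simp add: linear_conv_bounded_linear)
qed

lemma symmetric_matrix_inner_swap:
  fixes M :: "real^'n^'n"
  assumes "transpose M = M"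
  shows "x \<bullet> (M *v y) = y \<bullet> (M *v x)"
  by (metis assms dot_lmul_matrix inner_commute transpose_matrix_vector)

lemma matrix_vector_mult_axis_nth: "((M::real^'n^'n) *v axis j 1) $ i = M$i$j"
  by (simp add: matrix_vector_mult_def axis_def if_distrib cong: if_cong)

lemma axis_inner_matrix_axis: "axis i 1 \<bullet> ((M::real^'n^'n) *v axis j 1) = M$i$j"
  by (simp add: inner_axis' matrix_vector_mult_axis_nth)

lemma matrix_eq_zero_if_columns_zero:
  fixes E :: "real^'n^'n"
  assumes "\<And>j. E *v axis j 1 = 0"
  shows "E = 0"
  using assms by (simp add: vec_eq_iff flip: matrix_vector_mult_axis_nth)

lemma trace_eq_sum_axis: "trace (A::real^'n^'n) = (\<Sum>j\<in>UNIV. axis j 1 \<bullet> (A *v axis j 1))"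
  by (simp add: trace_def axis_inner_matrix_axis)

lemma outer_matrix_vector_mult: "outer u w *v x = (w \<bullet> x) *\<^sub>R u"
  by (simp add: vec_eq_iff outer_def matrix_vector_mult_def inner_vec_def sum_distrib_left
      mult.commute mult.left_commute)

lemma inner_outer_matrix_vector_mult: "x \<bullet> (outer u w *v x) = (x \<bullet> u) * (w \<bullet> x)"
  by (simp add: outer_matrix_vector_mult)

lemma outer_matrix_mult: "outer u w ** C = outer u (transpose C *v w)"
  by (simp add: vec_eq_iff outer_def matrix_matrix_mult_def matrix_vector_mult_def transpose_def
      sum_distrib_left mult.commute mult.left_commute)

lemma matrix_mult_outer: "C ** outer u w = outer (C *v u) w"
  by (simp add: vec_eq_iff outer_def matrix_matrix_mult_def matrix_vector_mult_def
      sum_distrib_right sum_distrib_left algebra_simps)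

lemma transpose_outer: "transpose (outer u w) = outer w u"
  by (simp add: vec_eq_iff outer_def transpose_def mult.commute)

lemma matrix_inv_right_left:
  fixes Q :: "real^'n^'n"
  assumes "invertible Q"
  shows "Q ** matrix_inv Q = mat 1" "matrix_inv Q ** Q = mat 1"
proof -
  have "Q ** matrix_inv Q = mat 1 \<and> matrix_inv Q ** Q = mat 1"
    using assms unfolding invertible_def matrix_inv_def by (rule someI_ex)
  then show "Q ** matrix_inv Q = mat 1" "matrix_inv Q ** Q = mat 1" by auto
qed

lemma matrix_vector_mult_matrix_inv:
  fixes Q :: "real^'n^'n"
  assumes "invertible Q"
  shows "Q *v (matrix_inv Q *v y) = y"
  using matrix_inv_right_left(1)[OF assms] by (simp add: matrix_vector_mul_assoc)

lemma matrix_eq_if_eq_on_matrix_inv_columns: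
  fixes M P Q :: "real^'n^'n"
  assumes "invertible M" and "\<And>j. P *v (matrix_inv M *v axis j 1) = Q *v (matrix_inv M *v axis j 1)"
  shows "P = Q"
proof -
  have "(P ** matrix_inv M - Q ** matrix_inv M) *v axis j 1 = 0" for j
    using assms(2)[of j] by (simp add: matrix_vector_mult_diff_rdistrib matrix_vector_mul_assoc)
  then have "P ** matrix_inv M ** M = Q ** matrix_inv M ** M"
    using matrix_eq_zero_if_columns_zero by fastforce
  then show ?thesis using matrix_inv_right_left(2)[OF assms(1)] by (simp flip: matrix_mul_assoc)
qed

text \<open>The matrix determinant lemma; the column-replacement matrix \<open>C\<close> conjugates
  \<open>I + u w\<^sup>T\<close> into \<open>I + e\<^sub>k z\<^sup>T\<close>, whose determinant Cramer's lemma computes.\<close>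
lemma det_mat_1_add_outer: fixes u w :: "real^'n" shows "det (mat 1 + outer u w) = 1 + u \<bullet> w"
proof (cases "u = 0")
  case True
  then have "outer u w = 0" by (simp add: outer_def vec_eq_iff)
  then show ?thesis using True by simp
next
  case False
  then obtain k where uk: "u$k \<noteq> 0" by (auto simp: vec_eq_iff)
  define C :: "real^'n^'n" where "C = (\<chi> i j. if j = k then u$i else (mat 1::real^'n^'n)$i$j)"
  have det_C: "det C = u$k"
    using cramer_lemma[of k "mat 1 :: real^'n^'n" u] unfolding matrix_vector_mul_lid C_def by simp
  define z where "z = transpose C *v w"
  have "C *v axis k 1 = u"
    by (simp add: vec_eq_iff matrix_vector_mult_axis_nth C_def)
  then have conj: "(mat 1 + outer u w) ** C = C ** (mat 1 + outer (axis k 1) z)"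
    by (simp add: matrix_add_ldistrib matrix_add_rdistrib outer_matrix_mult matrix_mult_outer z_def)
  have "transpose (mat 1 + outer (axis k 1) z)
      = (\<chi> i j. if j = k then (axis k 1 + z)$i else (mat 1::real^'n^'n)$i$j)"
    by (simp add: vec_eq_iff transpose_def outer_def mat_def axis_def)
  then have "det (transpose (mat 1 + outer (axis k 1) z)) = (axis k 1 + z)$k * det (mat 1::real^'n^'n)"
    using cramer_lemma[of k "mat 1::real^'n^'n" "axis k 1 + z"] unfolding matrix_vector_mul_lid
    by simp
  then have "det (mat 1 + outer (axis k 1) z) = 1 + z$k"
    by (simp add: axis_def)
  moreover have "z$k = u \<bullet> w"
    by (simp add: z_def matrix_vector_mult_def transpose_def C_def inner_vec_def mult.commute)
  ultimately have "det (mat 1 + outer u w) * det C = det C * (1 + u \<bullet> w)"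
    using conj by (metis det_mul)
  then show ?thesis using det_C uk by simp
qed

lemma det_add_outer:
  fixes Q :: "real^'n^'n"
  assumes "invertible Q"
  shows "det (Q + outer v v) = det Q * (1 + (matrix_inv Q *v v) \<bullet> v)"
proof -
  have "Q + outer v v = Q ** (mat 1 + outer (matrix_inv Q *v v) v)"
    using matrix_inv_right_left[OF assms]
    by (simp add: matrix_add_ldistrib matrix_mult_outer matrix_vector_mul_assoc)
  then show ?thesis by (simp add: det_mul det_mat_1_add_outer)
qed

lemma continuous_on_det:
  fixes F :: "'a::topological_space \<Rightarrow> real^'n^'n"
  assumes "continuous_on S F"
  shows "continuous_on S (\<lambda>x. det (F x))"
  unfolding det_def by (intro continuous_intros assms)

lemma matrix_inv_nth_cramer:
  fixes X :: "real^'n^'n"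
  assumes "invertible X"
  shows "matrix_inv X $ k $ j = det (\<chi> i l. if l = k then axis j 1 $ i else X$i$l) / det X"
proof -
  have "X *v (matrix_inv X *v axis j 1) = axis j 1"
    by (rule matrix_vector_mult_matrix_inv[OF assms])
  then have "matrix_inv X *v axis j 1
      = (\<chi> k. det (\<chi> i l. if l = k then axis j 1 $ i else X$i$l) / det X)"
    by (rule cramer[OF invertible_det_nz[THEN iffD1, OF assms], THEN iffD1])
  then show ?thesis by (simp flip: matrix_vector_mult_axis_nth)
qed

lemma continuous_on_matrix_inv:
  fixes F :: "'a::topological_space \<Rightarrow> real^'n^'n"
  assumes "continuous_on S F" and "\<And>x. x \<in> S \<Longrightarrow> invertible (F x)"
  shows "continuous_on S (\<lambda>x. matrix_inv (F x))"
proof -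
  have replace: "continuous_on S (\<lambda>x. \<chi> i l. if l = k then axis j 1 $ i else F x $ i $ l)"
    for j k :: 'n
  proof (intro continuous_on_vec_lambda)
    show "continuous_on S (\<lambda>x. if l = k then axis j 1 $ i else F x $ i $ l)" for i l
      by (cases "l = k") (simp_all add: continuous_on_component assms(1))
  qed
  have "continuous_on S
      (\<lambda>x. \<chi> k j. det (\<chi> i l. if l = k then axis j 1 $ i else F x $ i $ l) / det (F x))"
    using assms(2) invertible_det_nz
    by (intro continuous_on_vec_lambda continuous_on_divide continuous_on_det replace assms(1))
      blast
  then show ?thesis
    by (rule continuous_on_eq) (simp add: vec_eq_iff matrix_inv_nth_cramer assms(2))
qed

lemma continuous_on_trace:
  fixes F :: "'a::topological_space \<Rightarrow> real^'n^'n"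
  assumes "continuous_on S F"
  shows "continuous_on S (\<lambda>x. trace (F x))"
  unfolding trace_def by (intro continuous_intros continuous_on_component assms)

section \<open>Positive definite and semidefinite matrices\<close>

definition pos_semidef :: "real^'n^'n \<Rightarrow> bool" where
  "pos_semidef M \<longleftrightarrow> transpose M = M \<and> (\<forall>x. 0 \<le> x \<bullet> (M *v x))"

lemma nonneg_quadratic_discriminant:
  fixes a b c :: real
  assumes "\<And>t. 0 \<le> a + 2*t*b + t^2*c" and "0 \<le> c"
  shows "b^2 \<le> a*c"
proof (cases "c = 0")
  case True
  have "b = 0"
  proof (rule ccontr)
    assume "b \<noteq> 0"
    have "0 \<le> a + 2*(-(\<bar>a\<bar>+1)/(2*b))*b + (-(\<bar>a\<bar>+1)/(2*b))^2*c" by (rule assms)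
    also have "\<dots> = a - (\<bar>a\<bar>+1)" using \<open>b \<noteq> 0\<close> True by (simp add: field_simps)
    finally show False by linarith
  qed
  then show ?thesis using True by simp
next
  case False
  then have "c > 0" using assms(2) by simp
  have "0 \<le> a + 2*(-b/c)*b + (-b/c)^2*c" by (rule assms)
  also have "\<dots> = a - b^2/c" using \<open>c > 0\<close> by (simp add: field_simps power2_eq_square)
  finally show ?thesis using \<open>c > 0\<close> by (simp add: field_simps)
qed

lemma pos_semidef_cauchy_schwarz:
  fixes M :: "real^'n^'n"
  assumes "pos_semidef M"
  shows "(x \<bullet> (M *v y))^2 \<le> (x \<bullet> (M *v x)) * (y \<bullet> (M *v y))"
proof -
  have sym: "transpose M = M" and nonneg: "\<And>z. 0 \<le> z \<bullet> (M *v z)"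
    using assms by (auto simp: pos_semidef_def)
  have "0 \<le> x \<bullet> (M *v x) + 2*t*(x \<bullet> (M *v y)) + t^2*(y \<bullet> (M *v y))" for t
  proof -
    have "0 \<le> (x + t *\<^sub>R y) \<bullet> (M *v (x + t *\<^sub>R y))" by (rule nonneg)
    also have "\<dots> = x \<bullet> (M *v x) + 2*t*(x \<bullet> (M *v y)) + t^2*(y \<bullet> (M *v y))"
      using symmetric_matrix_inner_swap[OF sym, of y x]
      by (simp add: matrix_vector_right_distrib matrix_vector_mult_scaleR inner_add_left
          inner_add_right power2_eq_square algebra_simps)
    finally show ?thesis .
  qed
  then show ?thesis using nonneg_quadratic_discriminant nonneg by blast
qed

lemma pos_semidef_diag_nonneg: "pos_semidef (M::real^'n^'n) \<Longrightarrow> 0 \<le> M$i$i"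
  by (metis axis_inner_matrix_axis pos_semidef_def)

lemma pos_semidef_diag_zero:
  fixes M :: "real^'n^'n"
  assumes "pos_semidef M" "M$i$i = 0"
  shows "M$i$j = 0"
proof -
  have "(M$i$j)^2 \<le> M$i$i * M$j$j"
    using pos_semidef_cauchy_schwarz[OF assms(1), of "axis i 1" "axis j 1"]
    by (simp add: axis_inner_matrix_axis)
  then show ?thesis using assms(2) by simp
qed

lemma pos_semidef_outer: "pos_semidef (outer v v)"
  unfolding pos_semidef_def by (simp add: transpose_outer inner_outer_matrix_vector_mult inner_commute)

lemma pos_semidef_det_nonzero_imp_pos_def:
  fixes M :: "real^'n^'n"
  assumes "pos_semidef M" "det M \<noteq> 0"
  shows "pos_def M"
  unfolding pos_def_def
proof (intro conjI allI impI)
  show "transpose M = M" using assms(1) by (simp add: pos_semidef_def)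
  fix x :: "real^'n" assume "x \<noteq> 0"
  have "M *v x \<noteq> 0"
    using \<open>x \<noteq> 0\<close> assms(2) invertible_det_nz inj_matrix_vector_mult
    by (metis injD matrix_vector_mult_0_right)
  show "0 < x \<bullet> (M *v x)"
  proof (rule ccontr)
    assume "\<not> 0 < x \<bullet> (M *v x)"
    then have "x \<bullet> (M *v x) = 0" using assms(1) unfolding pos_semidef_def by (meson not_le order.antisym)
    then have "((M *v x) \<bullet> (M *v x))^2 \<le> 0"
      using pos_semidef_cauchy_schwarz[OF assms(1), of "M *v x" x] by simp
    then show False using \<open>M *v x \<noteq> 0\<close> by simp
  qed
qed

lemma pos_def_if_inner_le_mult:
  fixes M :: "real^'n^'n"
  assumes "pos_semidef M" and "\<And>x. x \<bullet> x \<le> c * (x \<bullet> (M *v x))"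
  shows "pos_def M"
  unfolding pos_def_def
proof (intro conjI allI impI)
  show "transpose M = M" using assms(1) by (simp add: pos_semidef_def)
  fix x :: "real^'n" assume "x \<noteq> 0"
  then have "0 < c * (x \<bullet> (M *v x))" using assms(2)[of x] inner_gt_zero_iff[of x] by linarith
  moreover have "0 \<le> x \<bullet> (M *v x)" using assms(1) by (simp add: pos_semidef_def)
  ultimately show "0 < x \<bullet> (M *v x)" by (simp add: zero_less_mult_iff)
qed

lemma pos_def_imp_pos_semidef: "pos_def (Q::real^'n^'n) \<Longrightarrow> pos_semidef Q"
  unfolding pos_semidef_def pos_def_def by (metis inner_zero_left order.refl order_less_imp_le)

lemma pos_def_add_pos_semidef:
  fixes Q M :: "real^'n^'n"
  assumes "pos_def Q" "pos_semidef M"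
  shows "pos_def (Q + M)"
  using assms unfolding pos_def_def pos_semidef_def
  by (auto simp: transpose_add matrix_vector_mult_add_rdistrib inner_add_right add_pos_nonneg)

lemma pos_def_scaleR: "pos_def (Q::real^'n^'n) \<Longrightarrow> 0 < c \<Longrightarrow> pos_def (c *\<^sub>R Q)"
  unfolding pos_def_def by (simp add: transpose_scalar scaleR_matrix_vector_mult)

lemma pos_def_midpoint:
  fixes P Q :: "real^'n^'n"
  assumes "pos_def P" "pos_def Q"
  shows "pos_def ((1/2) *\<^sub>R (P + Q))"
  using pos_def_add_pos_semidef[OF pos_def_scaleR pos_def_imp_pos_semidef[OF pos_def_scaleR], of P "1/2" Q "1/2"] assms
  by (simp add: scaleR_add_right)

lemma pos_def_invertible:
  fixes Q :: "real^'n^'n"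
  assumes "pos_def Q"
  shows "invertible Q"
proof -
  have "inj ((*v) Q)"
  proof (rule injI)
    fix x y assume "Q *v x = Q *v y"
    then have "(x - y) \<bullet> (Q *v (x - y)) = 0" by (simp add: matrix_vector_mult_diff_distrib)
    then show "x = y" using assms unfolding pos_def_def by (metis eq_iff_diff_eq_0 order_less_irrefl)
  qed
  then show ?thesis
    using matrix_left_invertible_injective invertible_left_inverse by blast
qed

text \<open>The segment from \<open>I\<close> to \<open>Q\<close> stays positive definite, hence invertible, so the
  determinant cannot change sign along it.\<close>
lemma pos_def_det_pos:
  fixes Q :: "real^'n^'n"
  assumes "pos_def Q"
  shows "0 < det Q"
proof (rule ccontr)
  assume "\<not> 0 < det Q"
  define F where "F = (\<lambda>s::real. det ((1 - s) *\<^sub>R mat 1 + s *\<^sub>R Q))"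
  have "continuous_on {0..1} F"
    unfolding F_def by (intro continuous_on_det continuous_intros)
  moreover have "F 0 = 1" "F 1 \<le> 0" using \<open>\<not> 0 < det Q\<close> by (simp_all add: F_def)
  ultimately obtain s where s: "0 \<le> s" "s \<le> 1" "F s = 0"
    using IVT2'[of F 1 0 0] by auto
  have "pos_def ((1 - s) *\<^sub>R mat 1 + s *\<^sub>R Q)"
  proof (cases "s = 1")
    case True
    then show ?thesis using assms by simp
  next
    case False
    have "pos_def ((1 - s) *\<^sub>R mat 1)"
      using \<open>s \<le> 1\<close> False by (intro pos_def_scaleR) (auto simp: pos_def_def)
    moreover have "pos_semidef (s *\<^sub>R Q)"
      using \<open>0 \<le> s\<close> pos_def_imp_pos_semidef[OF assms]
      by (simp add: pos_semidef_def transpose_scalar scaleR_matrix_vector_mult)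
    ultimately show ?thesis by (rule pos_def_add_pos_semidef)
  qed
  then show False
    using s(3) pos_def_invertible invertible_det_nz by (auto simp: F_def)
qed

lemma pos_def_inner_matrix_inv_pos:
  fixes Q :: "real^'n^'n"
  assumes "pos_def Q" "v \<noteq> 0"
  shows "0 < (matrix_inv Q *v v) \<bullet> v"
proof -
  define y where "y = matrix_inv Q *v v"
  have "Q *v y = v"
    unfolding y_def by (rule matrix_vector_mult_matrix_inv[OF pos_def_invertible[OF assms(1)]])
  moreover from this have "y \<noteq> 0" using assms(2) by auto
  ultimately show ?thesis using assms(1) by (auto simp: pos_def_def y_def)
qed

lemma pos_def_inner_matrix_inv_nonneg:
  fixes Q :: "real^'n^'n"
  assumes "pos_def Q"
  shows "0 \<le> (matrix_inv Q *v v) \<bullet> v"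
  using pos_def_inner_matrix_inv_pos[OF assms, of v] by (cases "v = 0") auto

lemma transpose_matrix_inv_symmetric:
  fixes P :: "real^'n^'n"
  assumes "invertible P" "transpose P = P"
  shows "transpose (matrix_inv P) = matrix_inv P"
proof -
  define P' where "P' = matrix_inv P"
  have inv: "P ** P' = mat 1" "P' ** P = mat 1"
    using matrix_inv_right_left[OF assms(1)] by (auto simp: P'_def)
  have "transpose P' ** P = mat 1"
    using arg_cong[OF inv(1), of transpose] assms(2) by (simp add: matrix_transpose_mul)
  then have "transpose P' = transpose P' ** (P ** P')" using inv by simp
  also have "\<dots> = P'" by (simp add: matrix_mul_assoc \<open>transpose P' ** P = mat 1\<close>)
  finally show ?thesis by (simp add: P'_def)
qed

lemma transpose_matrix_inv_pos_def: "pos_def (P::real^'n^'n) \<Longrightarrow> transpose (matrix_inv P) = matrix_inv P"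
  by (simp add: transpose_matrix_inv_symmetric pos_def_invertible pos_def_def)

lemma pos_def_matrix_inv_pos_semidef: "pos_def (P::real^'n^'n) \<Longrightarrow> pos_semidef (matrix_inv P)"
  unfolding pos_semidef_def
  using transpose_matrix_inv_pos_def pos_def_inner_matrix_inv_nonneg by (metis inner_commute)

section \<open>Monotonicity and strict concavity of the determinant\<close>

text \<open>Splitting off the rank-one part of \<open>M\<close> through column \<open>i\<close> (one step of a Cholesky
  factorisation) leaves a positive semidefinite matrix with fewer nonzero diagonal entries.\<close>
lemma pos_semidef_split_column:
  fixes M :: "real^'n^'n"
  assumes psd: "pos_semidef M" and pos: "0 < M$i$i"
  defines "v \<equiv> (1 / sqrt (M$i$i)) *\<^sub>R (M *v axis i 1)"
  shows "v \<noteq> 0" and "pos_semidef (M - outer v v)"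
    and "{j. (M - outer v v)$j$j \<noteq> 0} \<subseteq> {j. M$j$j \<noteq> 0} - {i}"
proof -
  have v_nth: "v$j = M$j$i / sqrt (M$i$i)" for j
    by (simp add: v_def matrix_vector_mult_axis_nth)
  have M_sym: "transpose M = M" using psd by (simp add: pos_semidef_def)
  show "v \<noteq> 0" using v_nth[of i] pos by (metis divide_eq_0_iff less_irrefl real_sqrt_eq_zero_cancel_iff zero_index)
  show "pos_semidef (M - outer v v)"
    unfolding pos_semidef_def
  proof (intro conjI allI)
    show "transpose (M - outer v v) = M - outer v v"
      by (simp add: transpose_diff transpose_outer M_sym)
    fix x :: "real^'n"
    have "(x \<bullet> v)^2 = (x \<bullet> (M *v axis i 1))^2 / M$i$i"
      using pos by (simp add: v_def power_divide)
    also have "\<dots> \<le> x \<bullet> (M *v x)"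
      using pos_semidef_cauchy_schwarz[OF psd, of x "axis i 1"] pos
      by (simp add: divide_le_eq axis_inner_matrix_axis)
    finally show "0 \<le> x \<bullet> ((M - outer v v) *v x)"
      by (simp add: matrix_vector_mult_diff_rdistrib inner_diff_right inner_outer_matrix_vector_mult
          inner_commute power2_eq_square)
  qed
  show "{j. (M - outer v v)$j$j \<noteq> 0} \<subseteq> {j. M$j$j \<noteq> 0} - {i}"
  proof (intro subsetI)
    fix j assume "j \<in> {j. (M - outer v v)$j$j \<noteq> 0}"
    then have j: "M$j$j - v$j * v$j \<noteq> 0" by (simp add: outer_def)
    have "j \<noteq> i" using j pos by (auto simp: v_nth)
    moreover have "M$j$j \<noteq> 0"
      using j pos_semidef_diag_zero[OF psd, of j i] by (auto simp: v_nth)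
    ultimately show "j \<in> {j. M$j$j \<noteq> 0} - {i}" by simp
  qed
qed

lemma det_less_add_outer:
  fixes Q :: "real^'n^'n"
  assumes "pos_def Q" "v \<noteq> 0"
  shows "det Q < det (Q + outer v v)"
proof -
  have "det (Q + outer v v) = det Q * (1 + (matrix_inv Q *v v) \<bullet> v)"
    by (rule det_add_outer[OF pos_def_invertible[OF assms(1)]])
  then show ?thesis
    using pos_def_inner_matrix_inv_pos[OF assms] pos_def_det_pos[OF assms(1)]
    by (simp add: algebra_simps)
qed

lemma pos_semidef_eq_0_iff_diag: "pos_semidef (M::real^'n^'n) \<Longrightarrow> M = 0 \<longleftrightarrow> (\<forall>i. M$i$i = 0)"
  using pos_semidef_diag_zero by (auto simp: vec_eq_iff)

lemma pos_semidef_split_rank_one: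
  fixes M :: "real^'n^'n"
  assumes "pos_semidef M" "M \<noteq> 0"
  obtains v where "v \<noteq> 0" "pos_semidef (M - outer v v)"
    "card {j. (M - outer v v)$j$j \<noteq> 0} < card {j. M$j$j \<noteq> 0}"
proof -
  obtain i where "M$i$i \<noteq> 0" using assms pos_semidef_eq_0_iff_diag by blast
  then have pos: "0 < M$i$i" using pos_semidef_diag_nonneg[OF assms(1), of i] by simp
  define v where "v = (1 / sqrt (M$i$i)) *\<^sub>R (M *v axis i 1)"
  note split = pos_semidef_split_column[OF assms(1) pos, folded v_def]
  have "card {j. (M - outer v v)$j$j \<noteq> 0} \<le> card ({j. M$j$j \<noteq> 0} - {i})"
    using split(3) by (intro card_mono) auto
  also have "\<dots> < card {j. M$j$j \<noteq> 0}"
    using \<open>M$i$i \<noteq> 0\<close> by (intro card_Diff1_less) auto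
  finally show ?thesis using that split(1,2) by blast
qed

lemma det_le_add_pos_semidef:
  fixes M Q :: "real^'n^'n"
  assumes "pos_semidef M" "pos_def Q"
  shows "det Q \<le> det (Q + M)"
  using assms
proof (induction "card {i. M$i$i \<noteq> 0}" arbitrary: M Q rule: less_induct)
  case less
  show ?case
  proof (cases "M = 0")
    case False
    then obtain v where v: "v \<noteq> 0" "pos_semidef (M - outer v v)"
      and card: "card {j. (M - outer v v)$j$j \<noteq> 0} < card {j. M$j$j \<noteq> 0}"
      using pos_semidef_split_rank_one[OF less.prems(1)] by blast
    have "pos_def (Q + outer v v)"
      using less.prems(2) pos_semidef_outer by (rule pos_def_add_pos_semidef)
    then have "det (Q + outer v v) \<le> det ((Q + outer v v) + (M - outer v v))"
      using less.hyps[OF card v(2)] by blast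
    then show ?thesis
      using det_less_add_outer[OF less.prems(2) v(1)] by simp
  qed simp
qed

lemma det_less_add_pos_semidef:
  fixes M Q :: "real^'n^'n"
  assumes "pos_semidef M" "pos_def Q" "M \<noteq> 0"
  shows "det Q < det (Q + M)"
proof -
  obtain v where v: "v \<noteq> 0" "pos_semidef (M - outer v v)"
    using pos_semidef_split_rank_one[OF assms(1,3)] by blast
  have "det Q < det (Q + outer v v)" by (rule det_less_add_outer[OF assms(2) v(1)])
  also have "\<dots> \<le> det ((Q + outer v v) + (M - outer v v))"
    by (rule det_le_add_pos_semidef[OF v(2) pos_def_add_pos_semidef[OF assms(2) pos_semidef_outer]])
  finally show ?thesis by simp
qed

text \<open>With \<open>M = (P+Q)/2\<close> and \<open>E = (P-Q)/2\<close> one has \<open>M P\<^sup>-\<^sup>1 M = Q + E P\<^sup>-\<^sup>1 E\<close>.\<close>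
lemma det_midpoint_strict_log_concave:
  fixes P Q :: "real^'n^'n"
  assumes pdP: "pos_def P" and pdQ: "pos_def Q" and "P \<noteq> Q"
  shows "det P * det Q < (det ((1/2) *\<^sub>R (P + Q)))^2"
proof -
  define P' where "P' = matrix_inv P"
  define M where "M = (1/2) *\<^sub>R (P + Q)"
  define E where "E = (1/2) *\<^sub>R (P - Q)"
  have inv: "P ** P' = mat 1" "P' ** P = mat 1"
    using matrix_inv_right_left[OF pos_def_invertible[OF pdP]] by (auto simp: P'_def)
  have "M = P - E" "P - E - E = Q" unfolding M_def E_def by (simp_all add: vec_eq_iff algebra_simps)
  then have key: "M ** P' ** M = Q + E ** P' ** E"
    by (simp add: matrix_diff_rdistrib matrix_diff_ldistrib inv flip: matrix_mul_assoc)
  have E_sym: "transpose E = E"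
    using pdP pdQ by (simp add: E_def transpose_scalar transpose_diff pos_def_def)
  have quad: "x \<bullet> ((E ** P' ** E) *v x) = (matrix_inv P *v (E *v x)) \<bullet> (E *v x)" for x
    using symmetric_matrix_inner_swap[OF E_sym, of x "P' *v (E *v x)"]
    by (simp add: P'_def matrix_vector_mul_assoc matrix_mul_assoc)
  have "pos_semidef (E ** P' ** E)"
    unfolding pos_semidef_def
    using transpose_matrix_inv_pos_def[OF pdP] E_sym quad pos_def_inner_matrix_inv_nonneg[OF pdP]
    by (simp add: matrix_transpose_mul matrix_mul_assoc P'_def)
  moreover have "E ** P' ** E \<noteq> 0"
  proof
    assume "E ** P' ** E = 0"
    then have "E *v axis j 1 = 0" for j
      using quad[of "axis j 1"] pos_def_inner_matrix_inv_pos[OF pdP] by fastforce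
    then have "E = 0" by (rule matrix_eq_zero_if_columns_zero)
    then show False using \<open>P \<noteq> Q\<close> by (simp add: E_def)
  qed
  ultimately have "det Q < det M * det P' * det M"
    using det_less_add_pos_semidef[OF _ pdQ] key by (metis det_mul)
  then have "det P * det Q < det P * (det M * det P' * det M)"
    using pos_def_det_pos[OF pdP] by simp
  also have "\<dots> = det (P ** P') * (det M)^2" by (simp add: det_mul power2_eq_square)
  finally show ?thesis by (simp add: inv M_def)
qed

section \<open>The trace of the inverse\<close>

text \<open>The variational characterisation \<open>y \<bullet> X\<^sup>-\<^sup>1 y = max\<^sub>w (2 y \<bullet> w - w \<bullet> X w)\<close>, attained
  exactly at \<open>X w = y\<close>.\<close>
lemma inner_matrix_inv_variational:
  fixes X :: "real^'n^'n"
  assumes "pos_def X"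
  shows "y \<bullet> (matrix_inv X *v y) - (2*(y \<bullet> w) - w \<bullet> (X *v w))
        = (w - matrix_inv X *v y) \<bullet> (X *v (w - matrix_inv X *v y))"
proof -
  define u where "u = matrix_inv X *v y"
  have "X *v u = y" unfolding u_def by (rule matrix_vector_mult_matrix_inv[OF pos_def_invertible[OF assms]])
  moreover have "u \<bullet> (X *v w) = w \<bullet> (X *v u)"
    using assms by (simp add: symmetric_matrix_inner_swap pos_def_def)
  ultimately show ?thesis
    by (simp add: matrix_vector_mult_diff_distrib inner_diff_left inner_diff_right inner_commute
        flip: u_def)
qed

lemma inner_matrix_inv_ge:
  fixes X :: "real^'n^'n"
  assumes "pos_def X"
  shows "2*(y \<bullet> w) - w \<bullet> (X *v w) \<le> y \<bullet> (matrix_inv X *v y)"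
  using inner_matrix_inv_variational[OF assms, of y w] assms unfolding pos_def_def
  by (metis diff_ge_0_iff_ge inner_zero_left order.refl order_less_imp_le)

lemma inner_matrix_inv_gt:
  fixes X :: "real^'n^'n"
  assumes "pos_def X" "X *v w \<noteq> y"
  shows "2*(y \<bullet> w) - w \<bullet> (X *v w) < y \<bullet> (matrix_inv X *v y)"
proof -
  have "w - matrix_inv X *v y \<noteq> 0"
    using assms(2) matrix_vector_mult_matrix_inv[OF pos_def_invertible[OF assms(1)]] by auto
  then have "0 < (w - matrix_inv X *v y) \<bullet> (X *v (w - matrix_inv X *v y))"
    using assms(1) by (simp add: pos_def_def)
  then show ?thesis using inner_matrix_inv_variational[OF assms(1), of y w] by simp
qed

lemma trace_matrix_inv_midpoint_strict_convex:
  fixes P Q :: "real^'n^'n"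
  assumes pdP: "pos_def P" and pdQ: "pos_def Q" and "P \<noteq> Q"
  shows "2 * trace (matrix_inv ((1/2) *\<^sub>R (P + Q))) < trace (matrix_inv P) + trace (matrix_inv Q)"
proof -
  define M where "M = (1/2) *\<^sub>R (P + Q)"
  have pdM: "pos_def M" unfolding M_def by (rule pos_def_midpoint[OF pdP pdQ])
  define z where "z j = matrix_inv M *v axis j 1" for j
  have Mz: "M *v z j = axis j 1" for j
    unfolding z_def by (rule matrix_vector_mult_matrix_inv[OF pos_def_invertible[OF pdM]])
  have M_split: "2 * (axis j 1 \<bullet> (matrix_inv M *v axis j 1))
      = (2*(axis j 1 \<bullet> z j) - z j \<bullet> (P *v z j)) + (2*(axis j 1 \<bullet> z j) - z j \<bullet> (Q *v z j))" for j
  proof -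
    have "z j \<bullet> (M *v z j) = (1/2) * (z j \<bullet> (P *v z j)) + (1/2) * (z j \<bullet> (Q *v z j))"
      by (simp add: M_def scaleR_matrix_vector_mult matrix_vector_mult_add_rdistrib inner_add_right)
    then show ?thesis using Mz[of j] by (simp add: z_def inner_commute)
  qed
  have "\<exists>j. P *v z j \<noteq> axis j 1 \<or> Q *v z j \<noteq> axis j 1"
    using matrix_eq_if_eq_on_matrix_inv_columns[OF pos_def_invertible[OF pdM], of P Q] \<open>P \<noteq> Q\<close>
    unfolding z_def by metis
  then obtain j where "P *v z j \<noteq> axis j 1 \<or> Q *v z j \<noteq> axis j 1" by blast
  then have "(\<Sum>j\<in>UNIV. 2 * (axis j 1 \<bullet> (matrix_inv M *v axis j 1)))
      < (\<Sum>j\<in>UNIV. axis j 1 \<bullet> (matrix_inv P *v axis j 1) + axis j 1 \<bullet> (matrix_inv Q *v axis j 1))"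
  proof (intro sum_strict_mono_ex1 ballI bexI)
    fix k :: 'n
    show "2 * (axis k 1 \<bullet> (matrix_inv M *v axis k 1))
        \<le> axis k 1 \<bullet> (matrix_inv P *v axis k 1) + axis k 1 \<bullet> (matrix_inv Q *v axis k 1)"
      using M_split[of k] inner_matrix_inv_ge[OF pdP, of "axis k 1" "z k"]
        inner_matrix_inv_ge[OF pdQ, of "axis k 1" "z k"] by linarith
  next
    assume "P *v z j \<noteq> axis j 1 \<or> Q *v z j \<noteq> axis j 1"
    then show "2 * (axis j 1 \<bullet> (matrix_inv M *v axis j 1))
        < axis j 1 \<bullet> (matrix_inv P *v axis j 1) + axis j 1 \<bullet> (matrix_inv Q *v axis j 1)"
      using M_split[of j] inner_matrix_inv_ge[OF pdP, of "axis j 1" "z j"]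
        inner_matrix_inv_ge[OF pdQ, of "axis j 1" "z j"]
        inner_matrix_inv_gt[OF pdP, of "z j" "axis j 1"] inner_matrix_inv_gt[OF pdQ, of "z j" "axis j 1"]
      by linarith
  qed simp_all
  then show ?thesis by (simp add: trace_eq_sum_axis sum.distrib sum_distrib_left M_def)
qed

lemma pos_semidef_inner_axis_le:
  fixes M :: "real^'n^'n"
  assumes "pos_semidef M"
  shows "\<bar>axis i 1 \<bullet> (M *v x)\<bar> \<le> sqrt (M$i$i) * sqrt (x \<bullet> (M *v x))"
proof -
  have "(axis i 1 \<bullet> (M *v x))^2 \<le> M$i$i * (x \<bullet> (M *v x))"
    using pos_semidef_cauchy_schwarz[OF assms, of "axis i 1" x] by (simp add: axis_inner_matrix_axis)
  then show ?thesis by (metis real_sqrt_abs real_sqrt_le_mono real_sqrt_mult)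
qed

lemma le_mult_sqrt_imp_le_square:
  fixes q c :: real
  assumes "0 \<le> q" "q \<le> c * sqrt q"
  shows "q \<le> c^2"
proof (cases "q = 0")
  case False
  then have "0 < sqrt q" using assms(1) by simp
  moreover have "sqrt q * sqrt q \<le> c * sqrt q" using assms by simp
  ultimately have "sqrt q \<le> c" by (rule mult_right_le_imp_le[rotated])
  then have "(sqrt q)^2 \<le> c^2" using \<open>0 < sqrt q\<close> by (intro power_mono) auto
  then show ?thesis using assms(1) by simp
qed (simp)

text \<open>From \<open>x \<bullet> M x = \<Sum>\<^sub>i x\<^sub>i (e\<^sub>i \<bullet> M x)\<close> by Cauchy--Schwarz, once for the form \<open>M\<close>
  and once in \<open>\<real>\<^sup>n\<close>.\<close>
lemma pos_semidef_inner_le_trace: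
  fixes M :: "real^'n^'n"
  assumes psd: "pos_semidef M"
  shows "x \<bullet> (M *v x) \<le> trace M * (x \<bullet> x)"
proof -
  define q where "q = x \<bullet> (M *v x)"
  have "0 \<le> q" using psd by (simp add: pos_semidef_def q_def)
  define a where "a = (\<chi> i. \<bar>x$i\<bar>)"
  define b where "b = (\<chi> i. sqrt (M$i$i))"
  have "q = (\<Sum>i\<in>UNIV. x$i * (axis i 1 \<bullet> (M *v x)))"
    by (simp add: q_def inner_axis') (simp add: inner_vec_def)
  also have "\<dots> \<le> (\<Sum>i\<in>UNIV. \<bar>x$i\<bar> * (sqrt (M$i$i) * sqrt q))"
  proof (rule sum_mono)
    fix i
    have "x$i * (axis i 1 \<bullet> (M *v x)) \<le> \<bar>x$i\<bar> * \<bar>axis i 1 \<bullet> (M *v x)\<bar>"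
      by (simp add: abs_mult[symmetric])
    also have "\<dots> \<le> \<bar>x$i\<bar> * (sqrt (M$i$i) * sqrt q)"
      unfolding q_def by (rule mult_left_mono[OF pos_semidef_inner_axis_le[OF psd]]) simp
    finally show "x$i * (axis i 1 \<bullet> (M *v x)) \<le> \<bar>x$i\<bar> * (sqrt (M$i$i) * sqrt q)" .
  qed
  also have "\<dots> = (a \<bullet> b) * sqrt q" by (simp add: a_def b_def inner_vec_def sum_distrib_right mult.assoc)
  also have "\<dots> \<le> (norm a * norm b) * sqrt q" using \<open>0 \<le> q\<close> by (intro mult_right_mono norm_cauchy_schwarz) simp
  finally have "q \<le> (norm a * norm b)^2" using \<open>0 \<le> q\<close> by (rule le_mult_sqrt_imp_le_square[rotated])
  then have "q \<le> (norm a)^2 * (norm b)^2" by (simp add: power_mult_distrib)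
  moreover have "(norm a)^2 = x \<bullet> x"
    by (simp add: power2_norm_eq_inner a_def inner_vec_def power2_eq_square[symmetric])
  moreover have "(norm b)^2 = trace M"
    using pos_semidef_diag_nonneg[OF psd] by (simp add: power2_norm_eq_inner b_def inner_vec_def trace_def)
  ultimately show ?thesis by (simp add: q_def mult.commute)
qed

lemma pos_def_inner_le_trace_matrix_inv:
  fixes W :: "real^'n^'n"
  assumes "pos_def W"
  shows "x \<bullet> x \<le> trace (matrix_inv W) * (x \<bullet> (W *v x))"
proof (cases "x = 0")
  case True
  then show ?thesis by simp
next
  case False
  have psd: "pos_semidef W" by (rule pos_def_imp_pos_semidef[OF assms])
  have "(x \<bullet> x)^2 = (x \<bullet> (W *v (matrix_inv W *v x)))^2"
    by (simp add: matrix_vector_mult_matrix_inv[OF pos_def_invertible[OF assms]])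
  also have "\<dots> \<le> (x \<bullet> (W *v x)) * (x \<bullet> (matrix_inv W *v x))"
    using pos_semidef_cauchy_schwarz[OF psd, of x "matrix_inv W *v x"]
    by (simp add: matrix_vector_mult_matrix_inv[OF pos_def_invertible[OF assms]] inner_commute)
  also have "\<dots> \<le> (x \<bullet> (W *v x)) * (trace (matrix_inv W) * (x \<bullet> x))"
    using pos_semidef_inner_le_trace[OF pos_def_matrix_inv_pos_semidef[OF assms], of x] psd
    by (intro mult_left_mono) (auto simp: pos_semidef_def)
  finally have "(x \<bullet> x) * (x \<bullet> x) \<le> (trace (matrix_inv W) * (x \<bullet> (W *v x))) * (x \<bullet> x)"
    by (simp add: power2_eq_square algebra_simps)
  then show ?thesis using False by simp
qed

section \<open>The matrix exponential\<close>

lemma mat_pow_scaleR: "mat_pow (t *\<^sub>R A) k = (t^k) *\<^sub>R mat_pow (A::real^'n^'n) k"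
  by (induction k) (simp_all add: matrix_scalar_ac scalar_matrix_assoc[symmetric])

lemma mat_pow_commute: "A ** mat_pow A k = mat_pow (A::real^'n^'n) k ** A"
  by (induction k) (simp_all add: matrix_mul_assoc)

lemma transpose_mat_pow: "transpose (mat_pow A k) = mat_pow (transpose (A::real^'n^'n)) k"
  by (induction k) (simp_all add: matrix_transpose_mul mat_pow_commute)

lemma norm_le_sum_norm_nth: "norm (x::'a::real_normed_vector^'n) \<le> (\<Sum>i\<in>UNIV. norm (x$i))"
  unfolding norm_vec_def by (rule L2_set_le_sum) simp

text \<open>A crude bound for left multiplication by \<open>A\<close> in the Frobenius norm; it only has to
  dominate the exponential series.\<close>
definition mult_norm_bound :: "real^'n^'n \<Rightarrow> real" where
  "mult_norm_bound A = real CARD('n) * (\<Sum>i\<in>UNIV. \<Sum>l\<in>UNIV. \<bar>A$i$l\<bar>)"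

lemma mult_norm_bound_nonneg: "0 \<le> mult_norm_bound A"
  by (simp add: mult_norm_bound_def sum_nonneg)

lemma norm_matrix_mult_le: "norm ((A::real^'n^'n) ** (Y::real^'n^'n)) \<le> mult_norm_bound A * norm Y"
proof -
  have entry: "\<bar>(A ** Y)$i$j\<bar> \<le> (\<Sum>l\<in>UNIV. \<bar>A$i$l\<bar>) * norm Y" for i j
  proof -
    have "\<bar>(A ** Y)$i$j\<bar> \<le> (\<Sum>l\<in>UNIV. \<bar>A$i$l\<bar> * \<bar>Y$l$j\<bar>)"
      by (simp add: matrix_matrix_mult_def order_trans[OF sum_abs] abs_mult)
    also have "\<dots> \<le> (\<Sum>l\<in>UNIV. \<bar>A$i$l\<bar> * norm Y)"
      by (intro sum_mono mult_left_mono order_trans[OF component_le_norm_cart Finite_Cartesian_Product.norm_nth_le]) simp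
    finally show ?thesis by (simp add: sum_distrib_right)
  qed
  have "norm (A ** Y) \<le> (\<Sum>i\<in>UNIV. \<Sum>j\<in>UNIV. \<bar>(A ** Y)$i$j\<bar>)"
    by (intro order_trans[OF norm_le_sum_norm_nth] sum_mono norm_le_l1_cart)
  also have "\<dots> \<le> (\<Sum>i\<in>UNIV. \<Sum>j::'n\<in>UNIV. (\<Sum>l\<in>UNIV. \<bar>A$i$l\<bar>) * norm Y)"
    by (intro sum_mono entry)
  also have "\<dots> = mult_norm_bound A * norm Y"
    by (simp add: mult_norm_bound_def sum_distrib_right sum_distrib_left algebra_simps)
  finally show ?thesis .
qed

lemma norm_mat_pow_le:
  "norm (mat_pow (A::real^'n^'n) k) \<le> mult_norm_bound A ^ k * norm (mat 1 :: real^'n^'n)"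
proof (induction k)
  case (Suc k)
  have "norm (mat_pow A (Suc k)) \<le> mult_norm_bound A * norm (mat_pow A k)"
    by (simp add: norm_matrix_mult_le)
  also have "\<dots> \<le> mult_norm_bound A * (mult_norm_bound A ^ k * norm (mat 1 :: real^'n^'n))"
    by (rule mult_left_mono[OF Suc.IH mult_norm_bound_nonneg])
  finally show ?case by simp
qed simp

definition mat_exp_term :: "real^'n^'n \<Rightarrow> nat \<Rightarrow> real \<Rightarrow> real^'n^'n" where
  "mat_exp_term A k t = (t^k / fact k) *\<^sub>R mat_pow A k"

lemma mat_exp_scaleR_eq_suminf: "mat_exp (t *\<^sub>R A) = (\<Sum>k. mat_exp_term A k t)"
  unfolding mat_exp_def mat_exp_term_def by (simp add: mat_pow_scaleR)

lemma norm_mat_exp_term_le: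
  fixes A :: "real^'n^'n"
  assumes "\<bar>t\<bar> \<le> R"
  shows "norm (mat_exp_term A k t)
    \<le> norm (mat 1 :: real^'n^'n) * (inverse (fact k) * (R * mult_norm_bound A)^k)"
proof -
  have "norm (mat_exp_term A k t) = \<bar>t\<bar>^k / fact k * norm (mat_pow A k)"
    by (simp add: mat_exp_term_def power_abs)
  also have "\<dots> \<le> R^k / fact k * (mult_norm_bound A ^ k * norm (mat 1 :: real^'n^'n))"
    using assms by (intro mult_mono divide_right_mono power_mono norm_mat_pow_le) auto
  also have "\<dots> = norm (mat 1 :: real^'n^'n) * (inverse (fact k) * (R * mult_norm_bound A)^k)"
    by (simp add: power_mult_distrib divide_inverse algebra_simps)
  finally show ?thesis .
qed

lemma summable_mat_exp_majorant:
  "summable (\<lambda>k. norm (mat 1 :: real^'n^'n) * (inverse (fact k) * (R * mult_norm_bound (A::real^'n^'n))^k))"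
  by (intro summable_mult summable_exp)

lemma summable_mat_exp_term: "summable (\<lambda>k. mat_exp_term (A::real^'n^'n) k t)"
  by (rule summable_comparison_test[OF _ summable_mat_exp_majorant[of "\<bar>t\<bar>" A]])
    (use norm_mat_exp_term_le[of t "\<bar>t\<bar>" A] in auto)

lemma continuous_on_mat_exp_interval:
  "continuous_on {-R..R} (\<lambda>t. mat_exp (t *\<^sub>R (A::real^'n^'n)))"
proof -
  have "uniform_limit {-R..R} (\<lambda>n t. \<Sum>k<n. mat_exp_term A k t) (\<lambda>t. \<Sum>k. mat_exp_term A k t) sequentially"
    by (rule Weierstrass_m_test[OF _ summable_mat_exp_majorant[of R A]])
      (auto intro!: norm_mat_exp_term_le)
  then have "continuous_on {-R..R} (\<lambda>t. \<Sum>k. mat_exp_term A k t)"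
    by (rule uniform_limit_theorem[rotated])
      (auto simp: mat_exp_term_def intro!: always_eventually continuous_intros)
  then show ?thesis by (simp add: mat_exp_scaleR_eq_suminf)
qed

lemma continuous_on_mat_exp: "continuous_on S (\<lambda>t. mat_exp (t *\<^sub>R (A::real^'n^'n)))"
proof (intro continuous_at_imp_continuous_on ballI)
  fix t :: real
  have "t \<in> interior {-(\<bar>t\<bar>+1)..\<bar>t\<bar>+1}" by auto
  then show "isCont (\<lambda>t. mat_exp (t *\<^sub>R A)) t"
    by (rule continuous_on_interior[OF continuous_on_mat_exp_interval])
qed

lemma mat_exp_zero: "mat_exp (0 :: real^'n^'n) = mat 1"
proof -
  have "(\<lambda>k. mat_exp_term A k 0) = (\<lambda>k. if k = 0 then mat 1 else 0)" for A :: "real^'n^'n"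
    by (auto simp: mat_exp_term_def)
  then show ?thesis
    using mat_exp_scaleR_eq_suminf[of 0 "0::real^'n^'n"] sums_single[of 0 "\<lambda>_. mat 1 :: real^'n^'n"]
    by (simp add: sums_iff)
qed

lemma transpose_mat_exp: "transpose (mat_exp (t *\<^sub>R (A::real^'n^'n))) = mat_exp (t *\<^sub>R transpose A)"
proof -
  have "transpose (mat_exp (t *\<^sub>R A)) = (\<Sum>k. transpose (mat_exp_term A k t))"
    unfolding mat_exp_scaleR_eq_suminf
    by (rule bounded_linear.suminf[OF linear_conv_bounded_linear[THEN iffD1, OF linear_transpose]
          summable_mat_exp_term])
  also have "\<dots> = (\<Sum>k. mat_exp_term (transpose A) k t)"
    by (simp add: mat_exp_term_def transpose_scalar transpose_mat_pow)
  finally show ?thesis by (simp add: mat_exp_scaleR_eq_suminf)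
qed

section \<open>The weighted Gramian\<close>

definition exp_column :: "real^'n^'n \<Rightarrow> 'n \<Rightarrow> real \<Rightarrow> real^'n" where
  "exp_column A i t = mat_exp (t *\<^sub>R A) *v axis i 1"

lemma Wi_eq_integral_outer: "Wi A i T = integral {0..T} (\<lambda>t. outer (exp_column A i t) (exp_column A i t))"
  by (simp add: Wi_def exp_column_def matrix_mult_outer outer_matrix_mult flip: transpose_mat_exp)

lemma continuous_on_exp_column: "continuous_on S (exp_column A i)"
  unfolding exp_column_def[abs_def] matrix_vector_mult_def
  by (intro continuous_on_vec_lambda continuous_intros continuous_on_component continuous_on_mat_exp)

lemma continuous_on_outer: "continuous_on S c \<Longrightarrow> continuous_on S (\<lambda>t. outer (c t) (c t :: real^'n))"
  unfolding outer_def by (intro continuous_on_vec_lambda continuous_intros)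

lemma integrable_outer_exp_column:
  "(\<lambda>t. outer (exp_column A i t) (exp_column A i t)) integrable_on {0..T}"
  by (intro integrable_continuous_interval continuous_on_outer continuous_on_exp_column)

lemma inner_Wi: "x \<bullet> (Wi A i T *v x) = integral {0..T} (\<lambda>t. (x \<bullet> exp_column A i t)^2)"
proof -
  have "x \<bullet> (Wi A i T *v x)
      = integral {0..T} ((\<lambda>M. x \<bullet> (M *v x)) \<circ> (\<lambda>t. outer (exp_column A i t) (exp_column A i t)))"
    unfolding Wi_eq_integral_outer
    by (rule integral_linear[OF integrable_outer_exp_column bounded_linear_quadratic_form, symmetric])
  then show ?thesis by (simp add: o_def inner_outer_matrix_vector_mult inner_commute power2_eq_square)
qed

lemma transpose_Wi: "transpose (Wi A i T) = Wi A i T"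
proof -
  have "transpose (Wi A i T)
      = integral {0..T} (transpose \<circ> (\<lambda>t. outer (exp_column A i t) (exp_column A i t)))"
    unfolding Wi_eq_integral_outer
    by (rule integral_linear[OF integrable_outer_exp_column
          linear_conv_bounded_linear[THEN iffD1, OF linear_transpose], symmetric])
  then show ?thesis by (simp add: o_def transpose_outer Wi_eq_integral_outer)
qed

lemma integrable_inner_exp_column_square: "(\<lambda>t. (x \<bullet> exp_column A i t)^2) integrable_on {0..T}"
  by (intro integrable_continuous_interval continuous_intros continuous_on_exp_column)

lemma inner_Wi_nonneg: "0 \<le> x \<bullet> (Wi A i T *v x)"
proof (cases "0 \<le> T")
  case True
  then show ?thesis
    unfolding inner_Wi by (intro integral_nonneg integrable_inner_exp_column_square) simp
qed (simp add: inner_Wi)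

text \<open>At \<open>t = 0\<close> the integrand is \<open>x\<^sub>i\<^sup>2\<close>, since \<open>e\<^sup>0 = I\<close>.\<close>
lemma inner_Wi_pos:
  assumes "0 < T" "x$i \<noteq> 0"
  shows "0 < x \<bullet> (Wi A i T *v x)"
proof -
  define g where "g = (\<lambda>t. (x \<bullet> exp_column A i t)^2)"
  have "continuous_on {0..T} g" unfolding g_def by (intro continuous_intros continuous_on_exp_column)
  moreover have "g 0 \<noteq> 0" using assms(2) by (simp add: g_def exp_column_def mat_exp_zero inner_axis)
  ultimately have "integral {0..T} g \<noteq> 0"
    using integral_cbox_eq_0_iff[of 0 T g] assms(1) by (auto simp: g_def)
  moreover have "0 \<le> integral {0..T} g" using inner_Wi_nonneg[of x A i T] by (simp add: g_def inner_Wi)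
  ultimately show ?thesis by (simp add: g_def inner_Wi)
qed

lemma inner_Wp: "(x::real^'n) \<bullet> (Wp A p T *v x) = (\<Sum>i\<in>UNIV. p$i * (x \<bullet> (Wi A i T *v x)))"
proof -
  have lin: "linear (\<lambda>M::real^'n^'n. x \<bullet> (M *v x))"
    by (rule bounded_linear.linear[OF bounded_linear_quadratic_form])
  show ?thesis unfolding Wp_def by (simp add: real_vector.linear_sum[OF lin] linear_cmul[OF lin])
qed

lemma transpose_Wp: "transpose (Wp A p T) = Wp A p T"
  unfolding Wp_def
  by (simp add: real_vector.linear_sum[OF linear_transpose] linear_cmul[OF linear_transpose] transpose_Wi)

lemma Wp_diff: "Wp A (p - q) T = Wp A p T - Wp A q T"
  unfolding Wp_def by (simp add: scaleR_diff_left sum_subtractf)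

lemma Wp_midpoint: "Wp A ((1/2) *\<^sub>R (p + q)) T = (1/2) *\<^sub>R (Wp A p T + Wp A q T)"
  unfolding Wp_def by (simp add: scaleR_add_left scaleR_add_right sum.distrib scaleR_sum_right)

lemma continuous_on_Wp: "continuous_on S (\<lambda>p. Wp A p T)"
  unfolding Wp_def by (intro continuous_intros)

lemma pos_semidef_Wp: "(\<And>i. 0 \<le> p$i) \<Longrightarrow> pos_semidef (Wp A p T)"
  unfolding pos_semidef_def
  by (auto simp: transpose_Wp inner_Wp intro!: sum_nonneg mult_nonneg_nonneg inner_Wi_nonneg)

lemma pos_def_Wp:
  fixes A :: "real^'n^'n"
  assumes "0 < T" and "\<And>i. 0 < p$i"
  shows "pos_def (Wp A p T)"
  unfolding pos_def_def
proof (intro conjI allI impI)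
  show "transpose (Wp A p T) = Wp A p T" by (rule transpose_Wp)
  fix x :: "real^'n" assume "x \<noteq> 0"
  then obtain i where "x$i \<noteq> 0" by (auto simp: vec_eq_iff)
  have "0 < (\<Sum>j\<in>UNIV. p$j * (x \<bullet> (Wi A j T *v x)))"
  proof (rule sum_pos2)
    show "0 < p$i * (x \<bullet> (Wi A i T *v x))"
      using assms inner_Wi_pos[OF assms(1) \<open>x$i \<noteq> 0\<close>] by simp
    show "0 \<le> p$j * (x \<bullet> (Wi A j T *v x))" for j :: 'n
      using assms(2)[of j] inner_Wi_nonneg[of x A j T] by (simp add: order_less_imp_le)
  qed simp_all
  then show "0 < x \<bullet> (Wp A p T *v x)" by (simp add: inner_Wp)
qed

lemma Wp_inj:
  assumes "\<And>x :: real^'n. Wp A x T = 0 \<Longrightarrow> x = 0" and "Wp A p T = Wp A q T"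
  shows "p = q"
  using assms(1)[of "p - q"] assms(2) by (simp add: Wp_diff)

section \<open>Minimisation over the simplex\<close>

lemma compact_std_simplex: "compact (std_simplex :: (real^'n) set)"
proof -
  have "std_simplex = {p::real^'n. (\<Sum>i\<in>UNIV. p$i) = 1} \<inter> (\<Inter>i. {p. 0 \<le> p$i})"
    by (auto simp: std_simplex_def)
  moreover have "closed {p::real^'n. (\<Sum>i\<in>UNIV. p$i) = 1}" "closed {p::real^'n. 0 \<le> p$i}" for i
    by (intro closed_Collect_eq closed_Collect_le continuous_intros)+
  ultimately have "closed (std_simplex :: (real^'n) set)" by (metis closed_INT closed_Int)
  moreover have "bounded (std_simplex :: (real^'n) set)"
    unfolding bounded_iff
  proof (intro exI ballI)
    fix p :: "real^'n" assume p: "p \<in> std_simplex"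
    have "norm p \<le> (\<Sum>i\<in>UNIV. \<bar>p$i\<bar>)" by (rule norm_le_l1_cart)
    with p show "norm p \<le> 1" by (simp add: std_simplex_def)
  qed
  ultimately show ?thesis by (simp add: compact_eq_bounded_closed)
qed

lemma std_simplex_midpoint:
  assumes "p \<in> std_simplex" "q \<in> std_simplex"
  shows "(1/2) *\<^sub>R (p + q) \<in> std_simplex"
  using assms by (simp add: std_simplex_def sum.distrib flip: sum_divide_distrib)

definition uniform_weights :: "real^'n" where
  "uniform_weights = (\<chi> i. 1 / real CARD('n))"

lemma uniform_weights_in_XT_simplex:
  assumes "0 < T"
  shows "uniform_weights \<in> XT A T \<inter> std_simplex"
  using pos_def_Wp[OF assms, of uniform_weights] by (simp add: XT_def std_simplex_def uniform_weights_def)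

lemma XT_simplex_midpoint:
  assumes "p \<in> XT A T \<inter> std_simplex" "q \<in> XT A T \<inter> std_simplex"
  shows "(1/2) *\<^sub>R (p + q) \<in> XT A T \<inter> std_simplex"
  using assms pos_def_midpoint std_simplex_midpoint by (auto simp: XT_def Wp_midpoint)

lemma attains_min_if_compact_sublevel:
  fixes h :: "'a::topological_space \<Rightarrow> real"
  assumes "compact K" "K \<subseteq> S" "p\<^sub>0 \<in> K" "continuous_on K h"
    and "\<And>q. q \<in> S \<Longrightarrow> q \<notin> K \<Longrightarrow> h p\<^sub>0 \<le> h q"
  shows "\<exists>p\<in>S. \<forall>q\<in>S. h p \<le> h q"
proof -
  obtain p where "p \<in> K" and p_min: "\<forall>q\<in>K. h p \<le> h q"
    using continuous_attains_inf[OF assms(1) _ assms(4)] assms(3) by blast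
  then have "h p \<le> h q" if "q \<in> S" for q
    using that assms(3,5) by (metis order_trans)
  then show ?thesis using \<open>p \<in> K\<close> assms(2) by blast
qed

lemma ex1_min_if_strict_midpoint_convex:
  fixes h :: "'a::real_vector \<Rightarrow> real"
  assumes "\<exists>p\<in>S. \<forall>q\<in>S. h p \<le> h q"
    and "\<And>p q. p \<in> S \<Longrightarrow> q \<in> S \<Longrightarrow> (1/2) *\<^sub>R (p + q) \<in> S"
    and "\<And>p q. p \<in> S \<Longrightarrow> q \<in> S \<Longrightarrow> p \<noteq> q \<Longrightarrow> 2 * h ((1/2) *\<^sub>R (p + q)) < h p + h q"
  shows "\<exists>!p. p \<in> S \<and> (\<forall>q\<in>S. h p \<le> h q)"
proof (rule ex_ex1I)
  show "\<exists>p. p \<in> S \<and> (\<forall>q\<in>S. h p \<le> h q)" using assms(1) by blast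
  fix p q
  assume p: "p \<in> S \<and> (\<forall>r\<in>S. h p \<le> h r)" and q: "q \<in> S \<and> (\<forall>r\<in>S. h q \<le> h r)"
  show "p = q"
  proof (rule ccontr)
    assume "p \<noteq> q"
    then have "2 * h ((1/2) *\<^sub>R (p + q)) < h p + h q" using p q assms(3) by blast
    moreover have "h p \<le> h ((1/2) *\<^sub>R (p + q))" "h q \<le> h ((1/2) *\<^sub>R (p + q))"
      using p q assms(2) by blast+
    ultimately show False by linarith
  qed
qed

lemma ex1_min_on_XT_simplex:
  fixes h :: "real^'n \<Rightarrow> real" and A :: "real^'n^'n"
  assumes "\<exists>p\<in>XT A T \<inter> std_simplex. \<forall>q\<in>XT A T \<inter> std_simplex. h p \<le> h q"
    and "\<And>p q. p \<in> XT A T \<Longrightarrow> q \<in> XT A T \<Longrightarrow> p \<noteq> q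
      \<Longrightarrow> 2 * h ((1/2) *\<^sub>R (p + q)) < h p + h q"
  shows "\<exists>!p. p \<in> XT A T \<inter> std_simplex \<and> (\<forall>q\<in>XT A T \<inter> std_simplex. h p \<le> h q)"
proof (rule ex1_min_if_strict_midpoint_convex[OF assms(1)])
  show "(1/2) *\<^sub>R (p + q) \<in> XT A T \<inter> std_simplex"
    if "p \<in> XT A T \<inter> std_simplex" "q \<in> XT A T \<inter> std_simplex" for p q
    using that by (rule XT_simplex_midpoint)
qed (use assms(2) in blast)

lemma fT_midpoint_strict_convex:
  assumes "\<And>x :: real^'n. Wp A x T = 0 \<Longrightarrow> x = 0"
    and "p \<in> XT A T" "q \<in> XT A T" "p \<noteq> q"
  shows "2 * fT A T ((1/2) *\<^sub>R (p + q)) < fT A T p + fT A T q"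
proof -
  have pd: "pos_def (Wp A p T)" "pos_def (Wp A q T)" using assms(2,3) by (simp_all add: XT_def)
  have "Wp A p T \<noteq> Wp A q T" using Wp_inj[OF assms(1)] assms(4) by blast
  then have "det (Wp A p T) * det (Wp A q T) < (det (Wp A ((1/2) *\<^sub>R (p + q)) T))^2"
    unfolding Wp_midpoint by (rule det_midpoint_strict_log_concave[OF pd])
  moreover have "0 < det (Wp A p T)" "0 < det (Wp A q T)"
    using pd by (simp_all add: pos_def_det_pos)
  ultimately have "ln (det (Wp A p T) * det (Wp A q T)) < ln ((det (Wp A ((1/2) *\<^sub>R (p + q)) T))^2)"
    using ln_less_cancel_iff mult_pos_pos order.strict_trans by metis
  then show ?thesis
    using \<open>0 < det (Wp A p T)\<close> \<open>0 < det (Wp A q T)\<close> by (simp add: fT_def ln_mult ln_realpow)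
qed

lemma gT_midpoint_strict_convex:
  assumes "\<And>x :: real^'n. Wp A x T = 0 \<Longrightarrow> x = 0"
    and "p \<in> XT A T" "q \<in> XT A T" "p \<noteq> q"
  shows "2 * gT A T ((1/2) *\<^sub>R (p + q)) < gT A T p + gT A T q"
proof -
  have pd: "pos_def (Wp A p T)" "pos_def (Wp A q T)" using assms(2,3) by (simp_all add: XT_def)
  have "Wp A p T \<noteq> Wp A q T" using Wp_inj[OF assms(1)] assms(4) by blast
  then show ?thesis
    unfolding gT_def Wp_midpoint by (rule trace_matrix_inv_midpoint_strict_convex[OF pd])
qed

text \<open>The sublevel set through the uniform weights is \<open>det W \<ge> e\<^sup>-\<^sup>c\<close>, a closed subset of \<open>\<Delta>\<close>
  on which \<open>W\<close> is automatically positive definite.\<close>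
lemma fT_attains_min:
  fixes A :: "real^'n^'n"
  assumes "0 < T"
  shows "\<exists>p\<in>XT A T \<inter> std_simplex. \<forall>q\<in>XT A T \<inter> std_simplex. fT A T p \<le> fT A T q"
proof -
  define c where "c = fT A T uniform_weights"
  define K where "K = std_simplex \<inter> {p. exp (-c) \<le> det (Wp A p T)}"
  have det_pos: "0 < det (Wp A p T)" if "p \<in> XT A T" for p
    using that pos_def_det_pos by (simp add: XT_def)
  have K_det_pos: "0 < det (Wp A p T)" if "p \<in> K" for p
    using that by (auto simp: K_def intro: less_le_trans[OF exp_gt_zero])
  have K_sub: "K \<subseteq> XT A T \<inter> std_simplex"
  proof
    fix p assume "p \<in> K"
    then have "p \<in> std_simplex" "0 < det (Wp A p T)"
      by (auto simp: K_def K_det_pos)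
    moreover from this have "pos_semidef (Wp A p T)"
      by (intro pos_semidef_Wp) (simp add: std_simplex_def)
    ultimately show "p \<in> XT A T \<inter> std_simplex"
      by (auto simp: XT_def intro: pos_semidef_det_nonzero_imp_pos_def)
  qed
  show ?thesis
  proof (rule attains_min_if_compact_sublevel)
    show "compact K"
      unfolding K_def
      by (intro compact_Int_closed compact_std_simplex closed_Collect_le continuous_intros
          continuous_on_det continuous_on_Wp)
    show "uniform_weights \<in> K"
      using uniform_weights_in_XT_simplex[OF assms, of A] det_pos by (simp add: K_def c_def fT_def)
    show "continuous_on K (fT A T)"
      unfolding fT_def[abs_def] using K_det_pos
      by (intro continuous_intros continuous_on_det continuous_on_Wp) (auto dest: K_det_pos)
    fix q assume "q \<in> XT A T \<inter> std_simplex" "q \<notin> K"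
    then have "det (Wp A q T) < exp (-c)" "0 < det (Wp A q T)"
      using det_pos by (auto simp: K_def)
    then have "ln (det (Wp A q T)) < ln (exp (-c))" by (intro ln_less_cancel_iff[THEN iffD2]) auto
    then show "fT A T uniform_weights \<le> fT A T q" by (simp add: fT_def c_def)
  qed (use K_sub in auto)
qed

text \<open>By \<open>\<bar>x\<bar>\<^sup>2 \<le> tr(W\<^sup>-\<^sup>1) (x \<bullet> W x)\<close>, the sublevel set \<open>g\<^sub>T \<le> c\<close> lies in the set \<open>K\<close> below,
  which is closed in \<open>\<Delta>\<close> and on which \<open>W\<close> is positive definite.\<close>
lemma gT_attains_min:
  fixes A :: "real^'n^'n"
  assumes "0 < T"
  shows "\<exists>p\<in>XT A T \<inter> std_simplex. \<forall>q\<in>XT A T \<inter> std_simplex. gT A T p \<le> gT A T q"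
proof -
  define c where "c = gT A T uniform_weights"
  define K where "K = std_simplex \<inter> (\<Inter>x. {p. x \<bullet> x \<le> c * (x \<bullet> (Wp A p T *v x))})"
  have K_sub: "K \<subseteq> XT A T \<inter> std_simplex"
  proof
    fix p assume "p \<in> K"
    then have "p \<in> std_simplex" "pos_def (Wp A p T)"
      by (auto simp: K_def std_simplex_def intro!: pos_def_if_inner_le_mult pos_semidef_Wp)
    then show "p \<in> XT A T \<inter> std_simplex" by (simp add: XT_def)
  qed
  have in_K: "q \<in> K" if "q \<in> XT A T \<inter> std_simplex" "gT A T q \<le> c" for q
  proof -
    have pd: "pos_def (Wp A q T)" using that by (simp add: XT_def)
    have "x \<bullet> x \<le> c * (x \<bullet> (Wp A q T *v x))" for x
    proof -
      have "x \<bullet> x \<le> gT A T q * (x \<bullet> (Wp A q T *v x))"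
        unfolding gT_def by (rule pos_def_inner_le_trace_matrix_inv[OF pd])
      also have "\<dots> \<le> c * (x \<bullet> (Wp A q T *v x))"
        using that(2) pos_def_imp_pos_semidef[OF pd]
        by (intro mult_right_mono) (auto simp: pos_semidef_def)
      finally show ?thesis .
    qed
    then show ?thesis using that by (simp add: K_def)
  qed
  show ?thesis
  proof (rule attains_min_if_compact_sublevel)
    show "compact K"
      unfolding K_def inner_Wp
      by (intro compact_Int_closed compact_std_simplex closed_INT ballI closed_Collect_le
          continuous_intros)
    show "uniform_weights \<in> K"
      using uniform_weights_in_XT_simplex[OF assms] by (intro in_K) (auto simp: c_def)
    show "continuous_on K (gT A T)"
      unfolding gT_def[abs_def] using K_sub
      by (intro continuous_on_trace continuous_on_matrix_inv continuous_on_Wp)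
        (auto simp: XT_def pos_def_invertible)
    fix q assume "q \<in> XT A T \<inter> std_simplex" "q \<notin> K"
    then show "gT A T uniform_weights \<le> gT A T q" using in_K by (force simp: c_def)
  qed (use K_sub in auto)
qed

theorem lemma1:
  fixes A :: "real^'n^'n" and T :: real
  assumes "T > 0"
    and "\<And>x :: real^'n. Wp A x T = 0 \<Longrightarrow> x = 0"
  shows "(\<exists>!p. p \<in> XT A T \<inter> std_simplex \<and> (\<forall>q \<in> XT A T \<inter> std_simplex. fT A T p \<le> fT A T q))
       \<and> (\<exists>!p. p \<in> XT A T \<inter> std_simplex \<and> (\<forall>q \<in> XT A T \<inter> std_simplex. gT A T p \<le> gT A T q))"
proof
  show "\<exists>!p. p \<in> XT A T \<inter> std_simplex \<and> (\<forall>q \<in> XT A T \<inter> std_simplex. fT A T p \<le> fT A T q)"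
    using fT_attains_min[OF assms(1)] fT_midpoint_strict_convex[OF assms(2)]
    by (rule ex1_min_on_XT_simplex)
  show "\<exists>!p. p \<in> XT A T \<inter> std_simplex \<and> (\<forall>q \<in> XT A T \<inter> std_simplex. gT A T p \<le> gT A T q)"
    using gT_attains_min[OF assms(1)] gT_midpoint_strict_convex[OF assms(2)]
    by (rule ex1_min_on_XT_simplex)
qed

end
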